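(* Suppose the hypotheses of Theorem 4 hold (either case (a) or case (b), with $\varepsilon(m,\alpha)$ defined accordingly). Let $B\in\mathbb{N}$ and $\gamma\in(0,\alpha)$. Then $$\liminf_{m\to\infty}\Pr\big[\widehat{\mathrm{pl}}^{\mathrm{boot},S}_{\varepsilon(m,\alpha)}(A)\ge1-\alpha-\gamma\big]\ge1-\alpha-\exp\!\Big(-\frac{6B\gamma^2}{4\gamma+3}\Big),$$ where the probability is over $S\sim\mathcal{D}^m$ and the bootstrap resamples. In particular, if $B\ge(4\gamma+3)\log(\gamma^{-1})/(6\gamma^2)$, then $$\liminf_{m\to\infty}\Pr\big[\widehat{\mathrm{pl}}^{\mathrm{boot},S}_{\varepsilon(m,\alpha-\gamma)}(A)\ge1-\alpha\big]\ge1-\alpha.$$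
   Context: Setting: data are i.i.d. from a distribution $\mathcal{D}$ on $\mathcal{X}\times\mathcal{Y}$; $\mathcal{H}=\{x\mapsto h(x;\theta)\mid\theta\in\Theta\}$ with $\Theta$ a topological space, $L$ a real-valued loss; $R_{\widetilde{\mathcal{D}}}(\theta)=\mathbb{E}_{\widetilde{\mathcal{D}}}[L(h(X;\theta),Y)]$, $R=R_{\mathcal{D}}$ (finite), $\widehat{R}_S(\theta)=\frac1m\sum_{i=1}^mL(h(X_i;\theta),Y_i)$. All events are measurable. $\widehat{\Theta}_S^\varepsilon=\{\theta\mid\widehat{R}_S(\theta)\le\inf_\vartheta\widehat{R}_S(\vartheta)+\varepsilon\}$, $\Theta_0^\delta=\{\theta\mid R(\theta)\le\inf_\vartheta R(\vartheta)+\delta\}$. Strong uniform convergence property: there is $w:\mathbb{R}^+\times\mathbb{R}^+\to\mathbb{R}$ (a "witness") such that for all $\varepsilon,\alpha>0$ and integers $m\ge w(\varepsilon,\alpha)$: (1) $\Pr_{S\sim\mathcal{D}^m}[\sup_\theta|R(\theta)-\widehat{R}_S(\theta)|\le\varepsilon]\ge1-\alpha$ and (2) $\inf_{\widetilde{\mathcal{D}}\in\mathcal{B}_m}\Pr_{S'\sim\widetilde{\mathcal{D}}^m}[\sup_\theta|R_{\widetilde{\mathcal{D}}}(\theta)-\widehat{R}_{S'}(\theta)|\le\varepsilon]\ge1-\alpha$, with $\mathcal{B}_m$ the empirical distributions $\mathrm{Unif}(S)$ of all possible realizations $S$ of $\mathcal{D}^m$; the strong uniform convergence function is $f(\varepsilon,\alpha)=\inf_w\lceil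 w(\varepsilon,\alpha)\rceil$. Hypotheses of Theorem 4: $A\subseteq\Theta$ is Borel with $\Theta_0^\delta\subseteq A$ for some $\delta>0$; $(\mathcal{H},L)$ has the strong uniform convergence property with function $f$; and either (a) a risk minimizer $\theta_0$ exists, an empirical risk minimizer exists for every sample, and $\varepsilon(m,\alpha)=\inf\{\varepsilon>0\mid m\ge f(\varepsilon/2,\alpha)\}$, or (b) $\varepsilon(m,\alpha)=\inf\{\varepsilon>0\mid m\ge\inf_{0<\delta'<\varepsilon}f((\varepsilon-\delta')/2,\alpha)\}$. Bootstrapped plausibility: $\mathrm{pl}^{\mathrm{boot},S}_\varepsilon(A)=\Pr_{S'\sim\mathrm{Unif}(S)^m}[\widehat{\Theta}_{S'}^\varepsilon\cap A\ne\varnothing\mid\widehat{\Theta}_{S'}^\varepsilon\ne\varnothing]$ (assumed well defined). Its Monte Carlo estimate with $B$ resamples is $\widehat{\mathrm{pl}}^{\mathrm{boot},S}_\varepsilon(A)=\frac1B\sum_{i=1}^BI(\widehat{\Theta}_{S_i}^\varepsilon\cap A\ne\varnothing)$, where, given $S$, $S_1,\dots,S_B$ are independent draws from $\mathrm{Unif}(S)^m$ conditioned on $\widehat{\Theta}_{S_i}^\varepsilon\ne\varnothing$. *)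

theory Defs
  imports "HOL-Probability.Probability"
begin

definition loss :: "('x \<Rightarrow> 'p \<Rightarrow> 'o) \<Rightarrow> ('o \<Rightarrow> 'y \<Rightarrow> real) \<Rightarrow> 'p \<Rightarrow> 'x \<times> 'y \<Rightarrow> real" where
  "loss h L \<theta> z = L (h (fst z) \<theta>) (snd z)"

definition risk :: "('x \<times> 'y) measure \<Rightarrow> ('x \<Rightarrow> 'p \<Rightarrow> 'o) \<Rightarrow> ('o \<Rightarrow> 'y \<Rightarrow> real) \<Rightarrow> 'p \<Rightarrow> real" where
  "risk D h L \<theta> = (\<integral>z. loss h L \<theta> z \<partial>D)"

text \<open>Empirical risk of a sample S = (S 0, ..., S (m-1)). It is also the risk under Unif(S).\<close>
definition emp_risk :: "('x \<Rightarrow> 'p \<Rightarrow> 'o) \<Rightarrow> ('o \<Rightarrow> 'y \<Rightarrow> real) \<Rightarrow> nat \<Rightarrow> (nat \<Rightarrow> 'x \<times> 'y) \<Rightarrow> 'p \<Rightarrow> real" where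
  "emp_risk h L m S \<theta> = (\<Sum>i<m. loss h L \<theta> (S i)) / real m"

definition sample_space :: "('x \<times> 'y) measure \<Rightarrow> nat \<Rightarrow> (nat \<Rightarrow> 'x \<times> 'y) measure" where
  "sample_space D m = PiM {..<m} (\<lambda>_. D)"

text \<open>Uniform resampling indices: S' = S o J with J uniform on {..<m}^m has law Unif(S)^m.\<close>
definition resample_pmf :: "nat \<Rightarrow> (nat \<Rightarrow> nat) pmf" where
  "resample_pmf m = Pi_pmf {..<m} 0 (\<lambda>_. pmf_of_set {..<m})"

definition erm_set :: "('x \<Rightarrow> 'p \<Rightarrow> 'o) \<Rightarrow> ('o \<Rightarrow> 'y \<Rightarrow> real) \<Rightarrow> nat \<Rightarrow> (nat \<Rightarrow> 'x \<times> 'y) \<Rightarrow> ereal \<Rightarrow> 'p set" where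
  "erm_set h L m S \<epsilon> =
     {\<theta>. ereal (emp_risk h L m S \<theta>) \<le> (INF \<phi>. ereal (emp_risk h L m S \<phi>)) + \<epsilon>}"

definition risk_set :: "('x \<times> 'y) measure \<Rightarrow> ('x \<Rightarrow> 'p \<Rightarrow> 'o) \<Rightarrow> ('o \<Rightarrow> 'y \<Rightarrow> real) \<Rightarrow> real \<Rightarrow> 'p set" where
  "risk_set D h L \<delta> = {\<theta>. ereal (risk D h L \<theta>) \<le> (INF \<phi>. ereal (risk D h L \<phi>)) + ereal \<delta>}"

definition suc_witness :: "('x \<times> 'y) measure \<Rightarrow> ('x \<Rightarrow> 'p \<Rightarrow> 'o) \<Rightarrow> ('o \<Rightarrow> 'y \<Rightarrow> real)
    \<Rightarrow> (real \<Rightarrow> real \<Rightarrow> real) \<Rightarrow> bool" where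
  "suc_witness D h L w \<longleftrightarrow>
    (\<forall>\<epsilon> \<alpha>. 0 < \<epsilon> \<longrightarrow> 0 < \<alpha> \<longrightarrow> (\<forall>m::nat. 0 < m \<longrightarrow> real m \<ge> w \<epsilon> \<alpha> \<longrightarrow>
       measure (sample_space D m)
         {S \<in> space (sample_space D m). \<forall>\<theta>. \<bar>risk D h L \<theta> - emp_risk h L m S \<theta>\<bar> \<le> \<epsilon>} \<ge> 1 - \<alpha>
     \<and> (\<forall>S \<in> space (sample_space D m).
          measure_pmf.prob (resample_pmf m)
            {J. \<forall>\<theta>. \<bar>emp_risk h L m S \<theta> - emp_risk h L m (S \<circ> J) \<theta>\<bar> \<le> \<epsilon>} \<ge> 1 - \<alpha>)))"

definition strong_uc :: "('x \<times> 'y) measure \<Rightarrow> ('x \<Rightarrow> 'p \<Rightarrow> 'o) \<Rightarrow> ('o \<Rightarrow> 'y \<Rightarrow> real) \<Rightarrow> bool" where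
  "strong_uc D h L \<longleftrightarrow> (\<exists>w. suc_witness D h L w)"

definition suc_fun :: "('x \<times> 'y) measure \<Rightarrow> ('x \<Rightarrow> 'p \<Rightarrow> 'o) \<Rightarrow> ('o \<Rightarrow> 'y \<Rightarrow> real) \<Rightarrow> real \<Rightarrow> real \<Rightarrow> ereal" where
  "suc_fun D h L \<epsilon> \<alpha> = (INF w \<in> {w. suc_witness D h L w}. ereal (real_of_int \<lceil>w \<epsilon> \<alpha>\<rceil>))"

definition eps_a :: "('x \<times> 'y) measure \<Rightarrow> ('x \<Rightarrow> 'p \<Rightarrow> 'o) \<Rightarrow> ('o \<Rightarrow> 'y \<Rightarrow> real) \<Rightarrow> nat \<Rightarrow> real \<Rightarrow> ereal" where
  "eps_a D h L m \<alpha> =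
     Inf (ereal ` {\<epsilon>. 0 < \<epsilon> \<and> ereal (real m) \<ge> suc_fun D h L (\<epsilon> / 2) \<alpha>})"

definition eps_b :: "('x \<times> 'y) measure \<Rightarrow> ('x \<Rightarrow> 'p \<Rightarrow> 'o) \<Rightarrow> ('o \<Rightarrow> 'y \<Rightarrow> real) \<Rightarrow> nat \<Rightarrow> real \<Rightarrow> ereal" where
  "eps_b D h L m \<alpha> =
     Inf (ereal ` {\<epsilon>. 0 < \<epsilon> \<and>
        ereal (real m) \<ge> (INF \<delta>' \<in> {0<..<\<epsilon>}. suc_fun D h L ((\<epsilon> - \<delta>') / 2) \<alpha>)})"

definition boot_event :: "('x \<Rightarrow> 'p \<Rightarrow> 'o) \<Rightarrow> ('o \<Rightarrow> 'y \<Rightarrow> real) \<Rightarrow> nat \<Rightarrow> (nat \<Rightarrow> 'x \<times> 'y) \<Rightarrow> ereal \<Rightarrow> (nat \<Rightarrow> nat) set" where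
  "boot_event h L m S \<epsilon> = {J. erm_set h L m (S \<circ> J) \<epsilon> \<noteq> {}}"

definition boot_pmf :: "('x \<Rightarrow> 'p \<Rightarrow> 'o) \<Rightarrow> ('o \<Rightarrow> 'y \<Rightarrow> real) \<Rightarrow> nat \<Rightarrow> (nat \<Rightarrow> 'x \<times> 'y) \<Rightarrow> ereal \<Rightarrow> (nat \<Rightarrow> nat) pmf" where
  "boot_pmf h L m S \<epsilon> = cond_pmf (resample_pmf m) (boot_event h L m S \<epsilon>)"

definition pl_boot :: "('x \<Rightarrow> 'p \<Rightarrow> 'o) \<Rightarrow> ('o \<Rightarrow> 'y \<Rightarrow> real) \<Rightarrow> 'p set \<Rightarrow> nat \<Rightarrow> (nat \<Rightarrow> 'x \<times> 'y) \<Rightarrow> ereal \<Rightarrow> real" where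
  "pl_boot h L A m S \<epsilon> =
     measure_pmf.prob (boot_pmf h L m S \<epsilon>) {J. erm_set h L m (S \<circ> J) \<epsilon> \<inter> A \<noteq> {}}"

definition mc_pmf :: "('x \<Rightarrow> 'p \<Rightarrow> 'o) \<Rightarrow> ('o \<Rightarrow> 'y \<Rightarrow> real) \<Rightarrow> nat \<Rightarrow> (nat \<Rightarrow> 'x \<times> 'y) \<Rightarrow> ereal \<Rightarrow> nat
    \<Rightarrow> (nat \<Rightarrow> nat \<Rightarrow> nat) pmf" where
  "mc_pmf h L m S \<epsilon> B = Pi_pmf {..<B} (\<lambda>_. 0) (\<lambda>_. boot_pmf h L m S \<epsilon>)"

definition pl_hat :: "('x \<Rightarrow> 'p \<Rightarrow> 'o) \<Rightarrow> ('o \<Rightarrow> 'y \<Rightarrow> real) \<Rightarrow> 'p set \<Rightarrow> nat \<Rightarrow> (nat \<Rightarrow> 'x \<times> 'y) \<Rightarrow> ereal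
    \<Rightarrow> nat \<Rightarrow> (nat \<Rightarrow> nat \<Rightarrow> nat) \<Rightarrow> real" where
  "pl_hat h L A m S \<epsilon> B Js =
     (\<Sum>i<B. if erm_set h L m (S \<circ> Js i) \<epsilon> \<inter> A \<noteq> {} then 1 else 0) / real B"

definition prob_pl_hat_ge :: "('x \<times> 'y) measure \<Rightarrow> ('x \<Rightarrow> 'p \<Rightarrow> 'o) \<Rightarrow> ('o \<Rightarrow> 'y \<Rightarrow> real) \<Rightarrow> 'p set
    \<Rightarrow> nat \<Rightarrow> ereal \<Rightarrow> nat \<Rightarrow> real \<Rightarrow> real" where
  "prob_pl_hat_ge D h L A m \<epsilon> B t =
     (\<integral>S. measure_pmf.prob (mc_pmf h L m S \<epsilon> B) {Js. pl_hat h L A m S \<epsilon> B Js \<ge> t}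
        \<partial>sample_space D m)"

end

theory Submission
  imports Defs
begin

text \<open>
  Once \<open>m\<close> is so large that \<open>\<epsilon>(m, \<beta>) < \<delta>/3\<close>, the strong uniform convergence property
  yields, with probability at least \<open>1 - \<beta>\<close>, a sample \<open>S\<close> with
  \<open>sup\<^sub>\<theta> |R - R\<^sub>S| \<le> \<delta>/6\<close>, and for every sample \<open>S\<close> a resample \<open>S'\<close> with
  \<open>sup\<^sub>\<theta> |R\<^sub>S - R\<^sub>S\<^sub>'| \<le> \<delta>/6\<close>, again with probability at least \<open>1 - \<beta>\<close>.
  Then every \<open>\<epsilon>\<close>-minimiser of \<open>R\<^sub>S\<^sub>'\<close> is a \<open>\<delta>\<close>-minimiser of \<open>R\<close>, hence lies in \<open>A\<close>,
  so the bootstrapped plausibility of \<open>A\<close> is at least \<open>1 - \<beta>\<close>. Hoeffding's inequality for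
  the \<open>B\<close> Monte Carlo resamples turns this into
  \<open>Pr[pl_hat \<ge> 1 - \<beta> - g] \<ge> (1 - \<beta>)(1 - exp(-2Bg\<^sup>2))\<close> for all large \<open>m\<close>, and both claims
  follow by elementary estimates of the exponent.
\<close>

lemma central_binomial_Suc:
  "(n + 1) * ((2 * n + 2) choose (n + 1)) = 2 * (2 * n + 1) * ((2 * n) choose n)"
proof -
  have "(n + 1) * ((2 * n + 2) choose (n + 1)) = (2 * n + 2) * ((2 * n + 1) choose n)"
    using Suc_times_binomial[of n "2 * n + 1"] by simp
  moreover have "(2 * n + 1) * ((2 * n) choose n) = ((2 * n + 1) choose (n + 1)) * (n + 1)"
    using Suc_times_binomial_eq[of "2 * n" n] by simp
  moreover have "(2 * n + 1) choose (n + 1) = (2 * n + 1) choose n"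
    by (subst binomial_symmetric) auto
  ultimately show ?thesis
    by (simp add: algebra_simps)
qed

lemma central_binomial_sq_le: "real ((2 * n) choose n) ^ 2 * (2 * n + 1) \<le> 16 ^ n"
proof (induction n)
  case 0
  then show ?case by simp
next
  case (Suc n)
  define b where "b = real ((2 * n) choose n)"
  define b' where "b' = real ((2 * Suc n) choose Suc n)"
  have rec: "b' * (n + 1) = 2 * (2 * n + 1) * b"
    using arg_cong[OF central_binomial_Suc[of n], of real] unfolding b_def b'_def
    by (simp add: algebra_simps)
  have "(b' ^ 2 * real (2 * Suc n + 1)) * (4 * (real n + 1) ^ 2) = 4 * (2 * real n + 3) * (b' * (n + 1)) ^ 2"
    by (simp add: power2_eq_square algebra_simps)
  also have "\<dots> = 16 * (b ^ 2 * (2 * n + 1)) * ((2 * real n + 1) * (2 * n + 3))"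
    unfolding rec by (simp add: power2_eq_square algebra_simps)
  also have "\<dots> \<le> 16 * 16 ^ n * (4 * (real n + 1) ^ 2)"
  proof (rule mult_mono)
    show "(2 * real n + 1) * (2 * n + 3) \<le> 4 * (real n + 1) ^ 2"
      by (simp add: power2_eq_square algebra_simps)
  qed (use Suc.IH in \<open>simp_all add: b_def\<close>)
  finally have "b' ^ 2 * real (2 * Suc n + 1) \<le> 16 * 16 ^ n"
    by (rule mult_right_le_imp_le) simp
  then show ?case by (simp only: b'_def power_Suc)
qed

lemma sum_if_eq_card:
  fixes x y :: real
  assumes "finite I"
  shows "(\<Sum>i\<in>I. if P i then x else y) = card {i\<in>I. P i} * x + (card I - real (card {i\<in>I. P i})) * y"
proof -
  have "(\<Sum>i\<in>I. if P i then x else y) = (\<Sum>i\<in>I. y + (if P i then x - y else 0))"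
    by (rule sum.cong) auto
  also have "\<dots> = card I * y + (\<Sum>i\<in>{i\<in>I. P i}. x - y)"
    unfolding sum.distrib sum.inter_filter[OF assms] by simp
  finally show ?thesis by (simp add: algebra_simps)
qed

lemma abs_mult_le_of_abs_div_le:
  fixes r x d :: real
  assumes "0 < r" and "\<bar>x * d / r\<bar> \<le> \<bar>d\<bar> / (2 * r)"
  shows "\<bar>x\<bar> * \<bar>d\<bar> \<le> 1 / 2 * \<bar>d\<bar>"
proof -
  have "\<bar>x\<bar> * \<bar>d\<bar> = \<bar>x * d / r\<bar> * r"
    using assms(1) by (simp add: abs_mult)
  also have "\<dots> \<le> \<bar>d\<bar> / (2 * r) * r"
    using assms by (intro mult_right_mono) auto
  also have "\<dots> = 1 / 2 * \<bar>d\<bar>"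
    using assms(1) by simp
  finally show ?thesis .
qed

lemma map_pmf_eq_bernoulli: "map_pmf P p = bernoulli_pmf (measure_pmf.prob p {x. P x})"
proof (rule pmf_eqI)
  fix b :: bool
  have "P -` {b} = (if b then {x. P x} else - {x. P x})" by auto
  moreover have "measure_pmf.prob p (- {x. P x}) = 1 - measure_pmf.prob p {x. P x}"
    using measure_pmf.prob_compl[of "{x. P x}" p] by (simp add: Compl_eq_Diff_UNIV)
  ultimately show "pmf (map_pmf P p) b = pmf (bernoulli_pmf (measure_pmf.prob p {x. P x})) b"
    by (simp add: pmf_map)
qed

lemma measure_cond_pmf:
  assumes "set_pmf p \<inter> X \<noteq> {}"
  shows "measure_pmf.prob (cond_pmf p X) Y = measure_pmf.prob p (X \<inter> Y) / measure_pmf.prob p X"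
  using emeasure_measure_pmf_not_zero[OF assms]
  by (simp add: cond_pmf.rep_eq[OF assms] measure_pmf.emeasure_eq_measure)

lemma measure_cond_pmf_ge:
  assumes "set_pmf p \<inter> X \<noteq> {}" and "V \<inter> set_pmf p \<subseteq> X \<inter> Y"
  shows "measure_pmf.prob p V \<le> measure_pmf.prob (cond_pmf p X) Y"
proof -
  have "measure_pmf.prob p V = measure_pmf.prob p (V \<inter> set_pmf p)"
    by (simp add: measure_Int_set_pmf)
  also have "\<dots> \<le> measure_pmf.prob p (X \<inter> Y)"
    using assms(2) by (rule measure_pmf.finite_measure_mono) simp
  also have "\<dots> \<le> measure_pmf.prob p (X \<inter> Y) / measure_pmf.prob p X"
  proof -
    have "0 < measure_pmf.prob p X" using assms(1) by (auto intro: measure_pmf_posI)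
    moreover have "measure_pmf.prob p X \<le> 1" by simp
    ultimately show ?thesis by (simp add: le_divide_eq mult_left_le)
  qed
  finally show ?thesis by (simp add: measure_cond_pmf[OF assms(1)])
qed

lemma cond_pmf_cong:
  assumes "set_pmf p \<inter> X \<noteq> {}" and "X \<inter> set_pmf p = X' \<inter> set_pmf p"
  shows "cond_pmf p X = cond_pmf p X'"
proof -
  have X': "set_pmf p \<inter> X' \<noteq> {}" using assms by blast
  have "measure_pmf.prob p X = measure_pmf.prob p X'"
    by (metis assms(2) measure_Int_set_pmf)
  show ?thesis
  proof (rule pmf_eqI)
    fix x
    show "pmf (cond_pmf p X) x = pmf (cond_pmf p X') x"
    proof (cases "x \<in> set_pmf p")
      case True
      then have "x \<in> X \<longleftrightarrow> x \<in> X'" using assms(2) by blast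
      then show ?thesis by (simp add: pmf_cond[OF assms(1)] pmf_cond[OF X'] \<open>measure_pmf.prob p X = _\<close>)
    next
      case False
      then show ?thesis by (simp add: pmf_cond[OF assms(1)] pmf_cond[OF X'] set_pmf_iff)
    qed
  qed
qed

lemma Pi_pmf_frequency_hoeffding:
  assumes "0 < B" and "t + \<gamma> \<le> measure_pmf.prob p {x. P x}" and "0 \<le> \<gamma>"
  shows "1 - exp (-2 * real B * \<gamma>\<^sup>2) \<le> measure_pmf.prob (Pi_pmf {..<B} d (\<lambda>_. p))
           {xs. t \<le> (\<Sum>i<B. if P (xs i) then 1 else 0) / real B}"
proof -
  define q where "q = measure_pmf.prob p {x. P x}"
  have "Pi_pmf {..<B} (P d) (\<lambda>_. bernoulli_pmf q) = map_pmf (\<lambda>xs. P \<circ> xs) (Pi_pmf {..<B} d (\<lambda>_. p))"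
    unfolding q_def map_pmf_eq_bernoulli[symmetric] by (rule Pi_pmf_map) auto
  moreover have "binomial_pmf B q = map_pmf (\<lambda>c. card {i\<in>{..<B}. c i}) (Pi_pmf {..<B} (P d) (\<lambda>_. bernoulli_pmf q))"
    by (rule binomial_pmf_altdef') (auto simp: q_def)
  moreover have "(\<Sum>i<B. if c i then 1 else 0) = real (card {i\<in>{..<B}. c i})" for c :: "nat \<Rightarrow> bool"
    by (simp add: sum.If_cases Int_def conj_commute)
  ultimately have "measure_pmf.prob (Pi_pmf {..<B} d (\<lambda>_. p))
           {xs. t \<le> (\<Sum>i<B. if P (xs i) then 1 else 0) / real B}
      = measure_pmf.prob (binomial_pmf B q) (UNIV - {k. real k / real B < t})"
    by (simp add: vimage_def not_less)
  also have "\<dots> = 1 - measure_pmf.prob (binomial_pmf B q) {k. real k / real B < t}"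
    using measure_pmf.prob_compl[of _ "binomial_pmf B q"] by simp
  moreover have "measure_pmf.prob (binomial_pmf B q) {k. real k / real B < t}
      \<le> measure_pmf.prob (binomial_pmf B q) {k. real k / real B \<le> q - \<gamma>}"
    using assms(2) by (intro measure_pmf.finite_measure_mono) (auto simp: q_def)
  moreover have "\<dots> \<le> exp (-2 * real B * \<gamma>\<^sup>2)"
  proof -
    have "binomial_distribution q" by (simp add: binomial_distribution_def q_def)
    from binomial_distribution.prob_le'[OF this assms(1) assms(3)] show ?thesis by simp
  qed
  ultimately show ?thesis by linarith
qed

lemma borel_measurable_of_finitely_many_events:
  fixes g :: "'a \<Rightarrow> real"
  assumes "finite I" and events: "\<And>i. i \<in> I \<Longrightarrow> {x \<in> space M. P i x} \<in> sets M"
    and determined: "\<And>x y. x \<in> space M \<Longrightarrow> y \<in> space M \<Longrightarrow> (\<forall>i\<in>I. P i x = P i y) \<Longrightarrow> g x = g y"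
  shows "g \<in> borel_measurable M"
proof -
  define \<Phi> where "\<Phi> x = restrict (\<lambda>i. P i x) I" for x
  define \<Omega> where "\<Omega> = PiE I (\<lambda>_. UNIV :: bool set)"
  have \<Phi>_measurable: "\<Phi> \<in> measurable M (count_space \<Omega>)"
  proof (subst measurable_count_space_eq2)
    show "finite \<Omega>" unfolding \<Omega>_def using assms(1) by (simp add: finite_PiE)
    have "{x \<in> space M. P i x = b} \<in> sets M" if "i \<in> I" for i b
      using events[OF that] sets.sets_Collect_neg[OF events[OF that]] by (cases b) simp_all
    then have level_set: "{x \<in> space M. \<forall>i\<in>I. P i x = a i} \<in> sets M" for a
      using assms(1) by (intro sets.sets_Collect_finite_All) auto
    show "\<Phi> \<in> space M \<rightarrow> \<Omega> \<and> (\<forall>a\<in>\<Omega>. \<Phi> -` {a} \<inter> space M \<in> sets M)"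
    proof (intro conjI ballI)
      show "\<Phi> \<in> space M \<rightarrow> \<Omega>" by (simp add: \<Phi>_def \<Omega>_def)
      fix a assume "a \<in> \<Omega>"
      then have "\<Phi> -` {a} \<inter> space M = {x \<in> space M. \<forall>i\<in>I. P i x = a i}"
        by (auto simp: \<Phi>_def \<Omega>_def PiE_def extensional_def fun_eq_iff)
      then show "\<Phi> -` {a} \<inter> space M \<in> sets M" using level_set by simp
    qed
  qed
  define rep where "rep x = (SOME y. y \<in> space M \<and> \<Phi> y = \<Phi> x)" for x
  define G where "G a = g (SOME y. y \<in> space M \<and> \<Phi> y = a)" for a
  have G_measurable: "G \<in> borel_measurable (count_space \<Omega>)"
    by (rule measurable_count_space_eq1[THEN iffD2]) simp
  with \<Phi>_measurable have measurable: "(\<lambda>x. G (\<Phi> x)) \<in> borel_measurable M"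
    by (rule measurable_compose)
  have "g x = G (\<Phi> x)" if "x \<in> space M" for x
  proof -
    have rep: "rep x \<in> space M \<and> \<Phi> (rep x) = \<Phi> x"
      unfolding rep_def by (rule someI_ex) (use that in blast)
    have "P i x = P i (rep x)" if "i \<in> I" for i
      using arg_cong[where f="\<lambda>f. f i", OF conjunct2[OF rep]] that by (simp add: \<Phi>_def)
    then have "g x = g (rep x)" by (intro determined[OF that conjunct1[OF rep]]) blast
    then show ?thesis by (simp add: G_def rep_def)
  qed
  then show ?thesis using measurable by (subst measurable_cong) auto
qed

lemma measure_mult_le_integral:
  assumes "prob_space M" and "G \<in> sets M" and "f \<in> borel_measurable M"
    and "\<And>x. x \<in> space M \<Longrightarrow> 0 \<le> f x" and "\<And>x. x \<in> space M \<Longrightarrow> f x \<le> 1"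
    and "\<And>x. x \<in> G \<Longrightarrow> c \<le> f x" and "0 \<le> c"
  shows "measure M G * c \<le> (\<integral>x. f x \<partial>M)"
proof -
  interpret prob_space M by (rule assms(1))
  have G: "integrable M (indicator G :: _ \<Rightarrow> real)"
    using assms(2) by (intro integrable_real_indicator) (simp_all add: emeasure_finite less_top[symmetric])
  have "measure M G * c = (\<integral>x. indicator G x * c \<partial>M)" using assms(2) G by simp
  also have "\<dots> \<le> (\<integral>x. f x \<partial>M)"
  proof (rule integral_mono)
    show "integrable M f" using assms(3-5) by (intro integrable_const_bound[where B=1]) auto
    show "indicator G x * c \<le> f x" if "x \<in> space M" for x
      using that assms(4,6) by (auto simp: indicator_def)
  qed (use G in simp)
  finally show ?thesis .
qed

lemma resample_pmf_range:
  assumes "J \<in> set_pmf (resample_pmf m)" and "i < m"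
  shows "J i < m"
proof -
  have "{..<m} \<noteq> {}" using assms(2) by blast
  then show ?thesis
    using assms unfolding resample_pmf_def by (subst (asm) set_Pi_pmf) (auto simp: PiE_dflt_def)
qed

lemma finite_set_pmf_resample: "finite (set_pmf (resample_pmf m))"
proof -
  have "finite (set_pmf (pmf_of_set {..<m}))" if "i < m" for i :: nat
    using that by (subst set_pmf_of_set) auto
  then show ?thesis
    unfolding resample_pmf_def by (subst set_Pi_pmf) (auto intro!: finite_PiE_dflt)
qed

lemma resample_count_binomial:
  assumes "0 < n"
  shows "map_pmf (\<lambda>J. card {i\<in>{..<2*n}. J i < n}) (resample_pmf (2*n)) = binomial_pmf (2*n) (1/2)"
proof -
  have "measure_pmf.prob (pmf_of_set {..<2*n}) {j. j < n} = 1/2"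
  proof -
    have "{..<2*n} \<inter> {j. j < n} = {..<n}" by auto
    moreover have "{..<2*n} \<noteq> {}" using assms lessThan_empty_iff by simp
    ultimately show ?thesis using assms by (simp add: measure_pmf_of_set[OF \<open>{..<2*n} \<noteq> {}\<close>])
  qed
  then have "map_pmf (\<lambda>j. j < n) (pmf_of_set {..<2*n}) = bernoulli_pmf (1/2)"
    by (metis map_pmf_eq_bernoulli)
  moreover have "Pi_pmf {..<2*n} True (\<lambda>_. map_pmf (\<lambda>j. j < n) (pmf_of_set {..<2*n}))
        = map_pmf (\<lambda>J. (\<lambda>j. j < n) \<circ> J) (resample_pmf (2*n))"
    unfolding resample_pmf_def by (rule Pi_pmf_map) (use assms in auto)
  moreover have "binomial_pmf (2*n) (1/2)
      = map_pmf (\<lambda>f. card {i\<in>{..<2*n}. f i}) (Pi_pmf {..<2*n} True (\<lambda>_. bernoulli_pmf (1/2)))"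
    by (rule binomial_pmf_altdef') auto
  ultimately show ?thesis by (simp add: map_pmf_comp o_def)
qed

lemma prob_resample_balanced:
  assumes "0 < n"
  shows "measure_pmf.prob (resample_pmf (2*n)) {J. card {i\<in>{..<2*n}. J i < n} = n}
         = real ((2*n) choose n) / 4 ^ n"
proof -
  have "measure_pmf.prob (resample_pmf (2*n)) {J. card {i\<in>{..<2*n}. J i < n} = n}
      = measure_pmf.prob (map_pmf (\<lambda>J. card {i\<in>{..<2*n}. J i < n}) (resample_pmf (2*n))) {n}"
    by (simp add: vimage_def)
  also have "\<dots> = real ((2*n) choose n) * (1/2) ^ n * (1/2) ^ n"
    unfolding resample_count_binomial[OF assms] by (simp add: measure_pmf_single pmf_binomial)
  also have "\<dots> = real ((2*n) choose n) / 4 ^ n"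
    by (simp add: power_one_over flip: power_mult_distrib)
  finally show ?thesis .
qed

lemma prob_space_sample_space: "prob_space D \<Longrightarrow> prob_space (sample_space D m)"
  unfolding sample_space_def by (rule prob_space_PiM) auto

lemma space_sample_space: "space (sample_space D m) = PiE {..<m} (\<lambda>_. space D)"
  by (simp add: sample_space_def space_PiM)

lemma resample_in_space:
  assumes "S \<in> space (sample_space D m)" and "J \<in> set_pmf (resample_pmf m)" and "i < m"
  shows "(S \<circ> J) i \<in> space D"
  using assms resample_pmf_range[OF assms(2,3)] by (auto simp: space_sample_space)

definition uc_sample_event :: "('x \<times> 'y) measure \<Rightarrow> ('x \<Rightarrow> 'p \<Rightarrow> 'o) \<Rightarrow> ('o \<Rightarrow> 'y \<Rightarrow> real)
    \<Rightarrow> nat \<Rightarrow> real \<Rightarrow> (nat \<Rightarrow> 'x \<times> 'y) set" where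
  "uc_sample_event D h L m \<eta> =
     {S \<in> space (sample_space D m). \<forall>\<theta>. \<bar>risk D h L \<theta> - emp_risk h L m S \<theta>\<bar> \<le> \<eta>}"

definition uc_resample_event :: "('x \<Rightarrow> 'p \<Rightarrow> 'o) \<Rightarrow> ('o \<Rightarrow> 'y \<Rightarrow> real)
    \<Rightarrow> nat \<Rightarrow> (nat \<Rightarrow> 'x \<times> 'y) \<Rightarrow> real \<Rightarrow> (nat \<Rightarrow> nat) set" where
  "uc_resample_event h L m S \<eta> =
     {J. \<forall>\<theta>. \<bar>emp_risk h L m S \<theta> - emp_risk h L m (S \<circ> J) \<theta>\<bar> \<le> \<eta>}"

definition uc_guarantee :: "('x \<times> 'y) measure \<Rightarrow> ('x \<Rightarrow> 'p \<Rightarrow> 'o) \<Rightarrow> ('o \<Rightarrow> 'y \<Rightarrow> real)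
    \<Rightarrow> nat \<Rightarrow> real \<Rightarrow> real \<Rightarrow> bool" where
  "uc_guarantee D h L m \<eta> \<beta> \<longleftrightarrow>
     1 - \<beta> \<le> measure (sample_space D m) (uc_sample_event D h L m \<eta>) \<and>
     (\<forall>S \<in> space (sample_space D m).
        1 - \<beta> \<le> measure_pmf.prob (resample_pmf m) (uc_resample_event h L m S \<eta>))"

lemma suc_witness_uc_guarantee:
  assumes "suc_witness D h L w" "0 < \<eta>" "0 < \<beta>" "0 < m" "w \<eta> \<beta> \<le> real m"
  shows "uc_guarantee D h L m \<eta> \<beta>"
  using assms unfolding suc_witness_def uc_guarantee_def uc_sample_event_def uc_resample_event_def
  by auto

lemma uc_guarantee_mono:
  assumes "uc_guarantee D h L m \<eta> \<beta>" and "\<eta> \<le> \<eta>'" and "prob_space D"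
    and "uc_sample_event D h L m \<eta>' \<in> sets (sample_space D m)"
  shows "uc_guarantee D h L m \<eta>' \<beta>"
proof -
  interpret prob_space "sample_space D m" using assms(3) by (rule prob_space_sample_space)
  have "measure (sample_space D m) (uc_sample_event D h L m \<eta>)
      \<le> measure (sample_space D m) (uc_sample_event D h L m \<eta>')"
    using assms(2,4) by (intro finite_measure_mono) (auto simp: uc_sample_event_def intro: order_trans)
  moreover have "measure_pmf.prob (resample_pmf m) (uc_resample_event h L m S \<eta>)
      \<le> measure_pmf.prob (resample_pmf m) (uc_resample_event h L m S \<eta>')" for S
    using assms(2) by (intro measure_pmf.finite_measure_mono) (auto simp: uc_resample_event_def intro: order_trans)
  ultimately show ?thesis using assms(1) unfolding uc_guarantee_def by (meson order_trans)
qed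

lemma suc_fun_le_witness: "suc_witness D h L w \<Longrightarrow> suc_fun D h L \<eta> \<beta> \<le> real_of_int \<lceil>w \<eta> \<beta>\<rceil>"
  unfolding suc_fun_def by (rule INF_lower) simp

lemma suc_fun_less_uc_guarantee:
  assumes "suc_fun D h L \<eta> \<beta> < ereal (real m + 1)" "0 < \<eta>" "0 < \<beta>" "0 < m"
  shows "uc_guarantee D h L m \<eta> \<beta>"
proof -
  from assms(1) obtain w where w: "suc_witness D h L w"
    and "real_of_int \<lceil>w \<eta> \<beta>\<rceil> < real m + 1"
    unfolding suc_fun_def by (auto simp: INF_less_iff)
  then have "\<lceil>w \<eta> \<beta>\<rceil> \<le> int m" by linarith
  then have "w \<eta> \<beta> \<le> real m" by linarith
  with w assms(2-4) show ?thesis by (rule suc_witness_uc_guarantee)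
qed

lemma eps_a_nonneg: "0 \<le> eps_a D h L m \<beta>"
  unfolding eps_a_def by (auto intro!: Inf_greatest)

lemma eps_b_nonneg: "0 \<le> eps_b D h L m \<beta>"
  unfolding eps_b_def by (auto intro!: Inf_greatest)

lemma eps_b_antimono: "m \<le> m' \<Longrightarrow> eps_b D h L m' \<beta> \<le> eps_b D h L m \<beta>"
  unfolding eps_b_def
  by (rule Inf_superset_mono, rule image_mono) (auto intro: order_trans)

lemma eps_a_less_uc_guarantee:
  assumes "eps_a D h L m \<beta> < ereal e" "0 < \<beta>" "0 < m" "prob_space D"
    and "uc_sample_event D h L m (e / 2) \<in> sets (sample_space D m)"
  shows "uc_guarantee D h L m (e / 2) \<beta>"
proof -
  from assms(1) obtain x where x: "0 < x" "suc_fun D h L (x / 2) \<beta> \<le> ereal (real m)" "x < e"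
    unfolding eps_a_def by (auto simp: Inf_less_iff)
  have "suc_fun D h L (x / 2) \<beta> < ereal (real m + 1)"
    using x(2) by (rule le_less_trans) simp
  then have "uc_guarantee D h L m (x / 2) \<beta>"
    using x(1) assms(2,3) by (intro suc_fun_less_uc_guarantee) auto
  then show ?thesis by (rule uc_guarantee_mono) (use x assms(4,5) in auto)
qed

lemma eps_b_less_uc_guarantee:
  assumes "eps_b D h L m \<beta> < ereal e" "0 < \<beta>" "0 < m" "prob_space D"
    and "uc_sample_event D h L m (e / 2) \<in> sets (sample_space D m)"
  shows "uc_guarantee D h L m (e / 2) \<beta>"
proof -
  from assms(1) obtain x where x: "0 < x" "x < e"
      "(INF \<delta>' \<in> {0<..<x}. suc_fun D h L ((x - \<delta>') / 2) \<beta>) \<le> ereal (real m)"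
    unfolding eps_b_def by (auto simp: Inf_less_iff)
  have "(INF \<delta>' \<in> {0<..<x}. suc_fun D h L ((x - \<delta>') / 2) \<beta>) < ereal (real m + 1)"
    using x(3) by (rule le_less_trans) simp
  then obtain d where d: "0 < d" "d < x" "suc_fun D h L ((x - d) / 2) \<beta> < ereal (real m + 1)"
    by (auto simp: INF_less_iff)
  then have "uc_guarantee D h L m ((x - d) / 2) \<beta>"
    using assms(2,3) by (intro suc_fun_less_uc_guarantee) auto
  then show ?thesis by (rule uc_guarantee_mono) (use x d assms(4,5) in auto)
qed

lemma eps_a_eventually_less:
  assumes "strong_uc D h L" "0 < e"
  shows "eventually (\<lambda>m. eps_a D h L m \<beta> < ereal e) sequentially"
proof -
  from assms(1) obtain w where w: "suc_witness D h L w" unfolding strong_uc_def by blast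
  have small: "eps_a D h L m \<beta> < ereal e" if "real_of_int \<lceil>w (e / 4) \<beta>\<rceil> \<le> real m" for m
  proof -
    have "suc_fun D h L ((e / 2) / 2) \<beta> \<le> ereal (real m)"
      using suc_fun_le_witness[OF w, of "e / 4" \<beta>] that by (simp add: order_trans)
    then have "eps_a D h L m \<beta> \<le> ereal (e / 2)"
      unfolding eps_a_def using assms(2) by (intro Inf_lower) auto
    also have "\<dots> < ereal e" using assms(2) by simp
    finally show ?thesis .
  qed
  have "eventually (\<lambda>m. real_of_int \<lceil>w (e / 4) \<beta>\<rceil> \<le> real m) sequentially"
    unfolding eventually_sequentially by (intro exI[of _ "nat \<lceil>w (e / 4) \<beta>\<rceil>"] allI impI) linarith
  then show ?thesis by (rule eventually_mono) (rule small)
qed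

lemma eps_b_eventually_less:
  assumes "strong_uc D h L" "0 < e"
  shows "eventually (\<lambda>m. eps_b D h L m \<beta> < ereal e) sequentially"
proof -
  from assms(1) obtain w where w: "suc_witness D h L w" unfolding strong_uc_def by blast
  have small: "eps_b D h L m \<beta> < ereal e" if "real_of_int \<lceil>w (e / 8) \<beta>\<rceil> \<le> real m" for m
  proof -
    have "(INF \<delta>' \<in> {0<..<e / 2}. suc_fun D h L ((e / 2 - \<delta>') / 2) \<beta>)
        \<le> suc_fun D h L ((e / 2 - e / 4) / 2) \<beta>"
      using assms(2) by (intro INF_lower) auto
    also have "\<dots> \<le> ereal (real m)"
      using suc_fun_le_witness[OF w, of "e / 8" \<beta>] that by (simp add: order_trans)
    finally have "eps_b D h L m \<beta> \<le> ereal (e / 2)"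
      unfolding eps_b_def using assms(2) by (intro Inf_lower) auto
    also have "\<dots> < ereal e" using assms(2) by simp
    finally show ?thesis .
  qed
  have "eventually (\<lambda>m. real_of_int \<lceil>w (e / 8) \<beta>\<rceil> \<le> real m) sequentially"
    unfolding eventually_sequentially by (intro exI[of _ "nat \<lceil>w (e / 8) \<beta>\<rceil>"] allI impI) linarith
  then show ?thesis by (rule eventually_mono) (rule small)
qed

lemma ereal_le_INF_plus_iff:
  "ereal (f x) \<le> (INF y. ereal (f y)) + ereal c \<longleftrightarrow> (\<forall>y. f x \<le> f y + c)"
proof
  assume le: "ereal (f x) \<le> (INF y. ereal (f y)) + ereal c"
  show "\<forall>y. f x \<le> f y + c"
  proof
    fix y
    have "(INF y. ereal (f y)) + ereal c \<le> ereal (f y) + ereal c"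
      by (intro add_right_mono INF_lower) simp
    from order_trans[OF le this] show "f x \<le> f y + c" by simp
  qed
next
  assume "\<forall>y. f x \<le> f y + c"
  then have "ereal (f x - c) \<le> (INF y. ereal (f y))" by (auto intro!: INF_greatest simp: diff_le_eq)
  then have "ereal (f x - c) + ereal c \<le> (INF y. ereal (f y)) + ereal c" by (rule add_right_mono)
  then show "ereal (f x) \<le> (INF y. ereal (f y)) + ereal c" by simp
qed

lemma mem_erm_set_iff:
  "\<theta> \<in> erm_set h L m S (ereal \<epsilon>) \<longleftrightarrow> (\<forall>\<phi>. emp_risk h L m S \<theta> \<le> emp_risk h L m S \<phi> + \<epsilon>)"
  unfolding erm_set_def by (simp add: ereal_le_INF_plus_iff)

lemma mem_risk_set_iff: "\<theta> \<in> risk_set D h L \<delta> \<longleftrightarrow> (\<forall>\<phi>. risk D h L \<theta> \<le> risk D h L \<phi> + \<delta>)"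
  unfolding risk_set_def by (simp add: ereal_le_INF_plus_iff)

lemma erm_set_cong:
  "(\<And>\<theta>. emp_risk h L m S \<theta> = emp_risk h L m S' \<theta>) \<Longrightarrow> erm_set h L m S \<epsilon> = erm_set h L m S' \<epsilon>"
  by (simp add: erm_set_def)

lemma emp_risk_cong:
  assumes "\<And>i. i < m \<Longrightarrow> S i = S' i"
  shows "emp_risk h L m S \<theta> = emp_risk h L m S' \<theta>"
  unfolding emp_risk_def using assms by (metis (no_types, lifting) lessThan_iff sum.cong)

lemma emp_risk_const: "0 < m \<Longrightarrow> emp_risk h L m (\<lambda>_. z) \<theta> = loss h L \<theta> z"
  unfolding emp_risk_def by simp

lemma erm_set_nonempty_of_minimizer:
  assumes "\<And>\<phi>. emp_risk h L m S \<theta> \<le> emp_risk h L m S \<phi>" and "0 \<le> \<epsilon>"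
  shows "erm_set h L m S (ereal \<epsilon>) \<noteq> {}"
proof -
  have "\<theta> \<in> erm_set h L m S (ereal \<epsilon>)"
    unfolding mem_erm_set_iff using assms by (auto intro: add_increasing2)
  then show ?thesis by blast
qed

lemma erm_set_nonempty_of_bdd_below:
  assumes "bdd_below (range (emp_risk h L m S))" and "0 < \<epsilon>"
  shows "erm_set h L m S (ereal \<epsilon>) \<noteq> {}"
proof -
  let ?F = "emp_risk h L m S"
  have "Inf (range ?F) < Inf (range ?F) + \<epsilon>" using assms(2) by simp
  then have "\<exists>x\<in>range ?F. x < Inf (range ?F) + \<epsilon>"
    using cInf_less_iff[of "range ?F"] assms(1) by blast
  then obtain \<theta> where "?F \<theta> < Inf (range ?F) + \<epsilon>" by blast
  moreover have "Inf (range ?F) \<le> ?F \<phi>" for \<phi> using assms(1) by (simp add: cInf_lower)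
  ultimately have "\<theta> \<in> erm_set h L m S (ereal \<epsilon>)"
    unfolding mem_erm_set_iff by (metis add_le_cancel_right less_imp_le order_trans)
  then show ?thesis by blast
qed

lemma bdd_below_emp_risk_of_erm_set:
  assumes "erm_set h L m S \<epsilon> \<noteq> {}" and "\<epsilon> \<noteq> \<infinity>"
  shows "bdd_below (range (emp_risk h L m S))"
proof -
  let ?I = "INF \<phi>. ereal (emp_risk h L m S \<phi>)"
  from assms(1) obtain \<theta> where \<theta>: "ereal (emp_risk h L m S \<theta>) \<le> ?I + \<epsilon>"
    unfolding erm_set_def by blast
  have "?I \<noteq> -\<infinity>" using \<theta> assms(2) by (cases \<epsilon>) auto
  moreover have "?I \<le> ereal (emp_risk h L m S \<theta>)" by (rule INF_lower) simp
  ultimately obtain c where c: "?I = ereal c" by (cases ?I) auto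
  have "c \<le> emp_risk h L m S \<phi>" for \<phi>
    using INF_lower[of \<phi> UNIV "\<lambda>\<phi>. ereal (emp_risk h L m S \<phi>)"] c by simp
  then show ?thesis by (meson bdd_belowI2)
qed

lemma bdd_below_emp_risk:
  assumes "\<And>i. i < m \<Longrightarrow> bdd_below (range (\<lambda>\<theta>. loss h L \<theta> (S i)))"
  shows "bdd_below (range (emp_risk h L m S))"
proof -
  obtain c where c: "\<And>i \<theta>. i < m \<Longrightarrow> c i \<le> loss h L \<theta> (S i)"
    using assms unfolding bdd_below_def by (metis rangeI)
  have "(\<Sum>i<m. c i) / m \<le> emp_risk h L m S \<theta>" for \<theta>
    unfolding emp_risk_def using c by (intro divide_right_mono sum_mono) auto
  then show ?thesis by (meson bdd_belowI2)
qed

lemma approx_erm_mem_risk_set: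
  assumes "\<forall>\<theta>. \<bar>risk D h L \<theta> - emp_risk h L m S \<theta>\<bar> \<le> \<eta>"
    and "\<theta> \<in> erm_set h L m S (ereal \<epsilon>)" and "\<epsilon> + 2 * \<eta> \<le> \<delta>"
  shows "\<theta> \<in> risk_set D h L \<delta>"
  unfolding mem_risk_set_iff
proof
  fix \<phi>
  have "emp_risk h L m S \<theta> \<le> emp_risk h L m S \<phi> + \<epsilon>"
    using assms(2) unfolding mem_erm_set_iff by blast
  then show "risk D h L \<theta> \<le> risk D h L \<phi> + \<delta>"
    using assms(1)[rule_format, of \<theta>] assms(1)[rule_format, of \<phi>] assms(3)
    unfolding abs_le_iff by linarith
qed

lemma emp_risk_two_point_resample:
  fixes a a' :: "'x \<times> 'y" and n :: nat
  defines "S \<equiv> restrict (\<lambda>i. if i < n then a else a') {..<2 * n}"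
  assumes "J \<in> set_pmf (resample_pmf (2 * n))"
  shows "emp_risk h L (2 * n) S \<theta> - emp_risk h L (2 * n) (S \<circ> J) \<theta>
       = (real n - card {i\<in>{..<2 * n}. J i < n}) * (loss h L \<theta> a - loss h L \<theta> a') / (2 * n)"
proof -
  have "(\<Sum>i<2 * n. loss h L \<theta> (S i)) = (\<Sum>i<2 * n. if i < n then loss h L \<theta> a else loss h L \<theta> a')"
    by (intro sum.cong) (auto simp: S_def)
  moreover have "{i\<in>{..<2 * n}. i < n} = {..<n}" by auto
  ultimately have sample: "(\<Sum>i<2 * n. loss h L \<theta> (S i)) = n * loss h L \<theta> a + (2 * n - real n) * loss h L \<theta> a'"
    using sum_if_eq_card[of "{..<2 * n}" "\<lambda>i. i < n"] by simp
  moreover have resample: "(\<Sum>i<2 * n. loss h L \<theta> ((S \<circ> J) i))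
      = card {i\<in>{..<2 * n}. J i < n} * loss h L \<theta> a
        + (2 * n - real (card {i\<in>{..<2 * n}. J i < n})) * loss h L \<theta> a'"
  proof -
    have "(\<Sum>i<2 * n. loss h L \<theta> ((S \<circ> J) i))
        = (\<Sum>i<2 * n. if J i < n then loss h L \<theta> a else loss h L \<theta> a')"
      using resample_pmf_range[OF assms(2)] by (intro sum.cong) (auto simp: S_def)
    then show ?thesis using sum_if_eq_card[of "{..<2 * n}" "\<lambda>i. J i < n"] by simp
  qed
  show ?thesis
    unfolding emp_risk_def sample resample by (simp add: diff_divide_distrib[symmetric] algebra_simps)
qed

text \<open>
  A resample of the sample \<open>a\<^sup>n a'\<^sup>n\<close> that moves its empirical risk by less than
  \<open>|d|/(4n)\<close> must contain exactly \<open>n\<close> copies of \<open>a\<close>; this has probability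
  \<open>C(2n, n)/4\<^sup>n \<le> 1/\<surd>(2n+1)\<close>.
\<close>
lemma prob_two_point_resample_stable:
  fixes a a' :: "'x \<times> 'y" and n :: nat and h :: "'x \<Rightarrow> 'p \<Rightarrow> 'o" and L :: "'o \<Rightarrow> 'y \<Rightarrow> real" and \<theta> :: 'p
  defines "S \<equiv> restrict (\<lambda>i. if i < n then a else a') {..<2 * n}"
    and "d \<equiv> loss h L \<theta> a - loss h L \<theta> a'"
  assumes "0 < n" and "d \<noteq> 0"
  shows "measure_pmf.prob (resample_pmf (2 * n)) (uc_resample_event h L (2 * n) S (\<bar>d\<bar> / (4 * n))) ^ 2
           * (2 * n + 1) \<le> 1"
proof -
  let ?p = "resample_pmf (2 * n)" and ?V = "uc_resample_event h L (2 * n) S (\<bar>d\<bar> / (4 * n))"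
  have "card {i\<in>{..<2 * n}. J i < n} = n" if "J \<in> ?V" "J \<in> set_pmf ?p" for J
  proof -
    define K where "K = card {i\<in>{..<2 * n}. J i < n}"
    have "\<bar>(real n - K) * d / (2 * n)\<bar> \<le> \<bar>d\<bar> / (4 * n)"
      using that(1) emp_risk_two_point_resample[OF that(2), where h=h and L=L and \<theta>=\<theta> and a=a and a'=a']
      unfolding uc_resample_event_def S_def d_def K_def by (metis (no_types, lifting) mem_Collect_eq)
    then have "\<bar>real n - K\<bar> * \<bar>d\<bar> \<le> 1 / 2 * \<bar>d\<bar>"
      using abs_mult_le_of_abs_div_le[of "2 * real n" "real n - K" d] assms(3) by simp
    then have "\<bar>real n - K\<bar> \<le> 1 / 2" using assms(4) by simp
    then show ?thesis unfolding K_def by linarith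
  qed
  then have "measure_pmf.prob ?p ?V \<le> measure_pmf.prob ?p {J. card {i\<in>{..<2 * n}. J i < n} = n}"
    by (subst measure_Int_set_pmf[symmetric]) (auto intro!: measure_pmf.finite_measure_mono)
  also have "\<dots> = real ((2 * n) choose n) / 4 ^ n" by (rule prob_resample_balanced[OF assms(3)])
  finally have "measure_pmf.prob ?p ?V ^ 2 * (2 * n + 1) \<le> (real ((2 * n) choose n) / 4 ^ n) ^ 2 * (2 * n + 1)"
    by (intro mult_right_mono power_mono) auto
  also have "\<dots> = real ((2 * n) choose n) ^ 2 * (2 * n + 1) / 16 ^ n"
  proof -
    have "((4::real) ^ n) ^ 2 = (4 ^ 2) ^ n" by (simp only: power_mult[symmetric] mult.commute)
    then show ?thesis by (simp add: power_divide)
  qed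
  also have "\<dots> \<le> 1" using central_binomial_sq_le[of n] by simp
  finally show ?thesis .
qed

lemma prob_pl_hat_ge_nonneg: "0 \<le> prob_pl_hat_ge D h L A m \<epsilon> B t"
  unfolding prob_pl_hat_ge_def by (rule integral_nonneg_AE) simp

lemma mc_prob_pl_hat_ge_cong:
  assumes "set_pmf (resample_pmf m) \<inter> boot_event h L m S \<epsilon> \<noteq> {}"
    and same: "\<And>J. J \<in> set_pmf (resample_pmf m) \<Longrightarrow>
       (erm_set h L m (S \<circ> J) \<epsilon> \<noteq> {} \<longleftrightarrow> erm_set h L m (S' \<circ> J) \<epsilon> \<noteq> {}) \<and>
       (erm_set h L m (S \<circ> J) \<epsilon> \<inter> A \<noteq> {} \<longleftrightarrow> erm_set h L m (S' \<circ> J) \<epsilon> \<inter> A \<noteq> {})"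
  shows "measure_pmf.prob (mc_pmf h L m S \<epsilon> B) {Js. t \<le> pl_hat h L A m S \<epsilon> B Js}
       = measure_pmf.prob (mc_pmf h L m S' \<epsilon> B) {Js. t \<le> pl_hat h L A m S' \<epsilon> B Js}"
proof -
  let ?p = "resample_pmf m"
  have "boot_event h L m S \<epsilon> \<inter> set_pmf ?p = boot_event h L m S' \<epsilon> \<inter> set_pmf ?p"
    using same unfolding boot_event_def by blast
  then have boot: "boot_pmf h L m S \<epsilon> = boot_pmf h L m S' \<epsilon>"
    unfolding boot_pmf_def by (rule cond_pmf_cong[OF assms(1)])
  let ?M = "mc_pmf h L m S \<epsilon> B"
  have "Js i \<in> set_pmf ?p" if "Js \<in> set_pmf ?M" "i < B" for Js i
  proof -
    have "Js i \<in> set_pmf (boot_pmf h L m S \<epsilon>)"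
      using that unfolding mc_pmf_def by (subst (asm) set_Pi_pmf) (auto simp: PiE_dflt_def)
    then show ?thesis unfolding boot_pmf_def using assms(1) by simp
  qed
  then have "pl_hat h L A m S \<epsilon> B Js = pl_hat h L A m S' \<epsilon> B Js" if "Js \<in> set_pmf ?M" for Js
    unfolding pl_hat_def using same that by (intro arg_cong2[where f="(/)"] sum.cong) auto
  then have "{Js. t \<le> pl_hat h L A m S \<epsilon> B Js} \<inter> set_pmf ?M
      = {Js. t \<le> pl_hat h L A m S' \<epsilon> B Js} \<inter> set_pmf ?M" by auto
  moreover have "?M = mc_pmf h L m S' \<epsilon> B" unfolding mc_pmf_def boot ..
  ultimately show ?thesis by (metis measure_Int_set_pmf)
qed

locale bootstrap_plausibility =
  fixes D :: "('x \<times> 'y) measure"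
    and h :: "'x \<Rightarrow> 'p \<Rightarrow> 'o"
    and L :: "'o \<Rightarrow> 'y \<Rightarrow> real"
    and A :: "'p set"
    and eps :: "nat \<Rightarrow> real \<Rightarrow> ereal"
    and \<alpha> \<gamma> :: real
  assumes prob_space_D: "prob_space D"
    and A_contains: "\<exists>\<delta>>0. risk_set D h L \<delta> \<subseteq> A"
    and suc: "strong_uc D h L"
    and eps_cases:
      "((\<exists>\<theta>0. \<forall>\<theta>. risk D h L \<theta>0 \<le> risk D h L \<theta>)
          \<and> (\<forall>m S. (\<forall>i<m. S i \<in> space D) \<longrightarrow> (\<exists>\<theta>. \<forall>\<phi>. emp_risk h L m S \<theta> \<le> emp_risk h L m S \<phi>))
          \<and> eps = eps_a D h L)
       \<or> eps = eps_b D h L"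
    and uc_event_measurable: "\<And>m \<eta>. uc_sample_event D h L m \<eta> \<in> sets (sample_space D m)"
    and nonempty_measurable: "\<And>m \<epsilon> J. {S \<in> space (sample_space D m). erm_set h L m (S \<circ> J) \<epsilon> \<noteq> {}}
                     \<in> sets (sample_space D m)"
    and hits_A_measurable: "\<And>m \<epsilon> J. {S \<in> space (sample_space D m). erm_set h L m (S \<circ> J) \<epsilon> \<inter> A \<noteq> {}}
                     \<in> sets (sample_space D m)"
    and well_defined: "\<And>m S \<beta>. S \<in> space (sample_space D m) \<Longrightarrow> \<beta> \<in> {\<alpha>, \<alpha> - \<gamma>} \<Longrightarrow>
                     set_pmf (resample_pmf m) \<inter> boot_event h L m S (eps m \<beta>) \<noteq> {}"
begin

lemma eps_nonneg: "0 \<le> eps m \<beta>"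
  using eps_cases eps_a_nonneg eps_b_nonneg by metis

lemma eps_less_uc_guarantee:
  assumes "eps m \<beta> < ereal e" and "0 < \<beta>" and "0 < m"
  shows "uc_guarantee D h L m (e / 2) \<beta>"
  using eps_cases eps_a_less_uc_guarantee[OF _ assms(2,3) prob_space_D uc_event_measurable]
    eps_b_less_uc_guarantee[OF _ assms(2,3) prob_space_D uc_event_measurable] assms(1)
  by metis

lemma eps_eventually_less: "0 < e \<Longrightarrow> eventually (\<lambda>m. eps m \<beta> < ereal e) sequentially"
  using eps_cases eps_a_eventually_less[OF suc] eps_b_eventually_less[OF suc] by metis

lemma constant_sample_erm_set_nonempty:
  assumes "0 < m" and "\<beta> \<in> {\<alpha>, \<alpha> - \<gamma>}" and "z \<in> space D"
  shows "erm_set h L m (\<lambda>_. z) (eps m \<beta>) \<noteq> {}"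
proof -
  define S where "S = restrict (\<lambda>_. z) {..<m}"
  have S: "S \<in> space (sample_space D m)" using assms(3) by (simp add: S_def space_sample_space)
  from well_defined[OF S assms(2)] obtain J where J: "J \<in> set_pmf (resample_pmf m)"
    and "erm_set h L m (S \<circ> J) (eps m \<beta>) \<noteq> {}"
    unfolding boot_event_def by blast
  moreover have "erm_set h L m (S \<circ> J) (eps m \<beta>) = erm_set h L m (\<lambda>_. z) (eps m \<beta>)"
    using resample_pmf_range[OF J] by (intro erm_set_cong emp_risk_cong) (simp add: S_def)
  ultimately show ?thesis by simp
qed

lemma loss_bdd_below:
  assumes "0 < m" and "\<beta> \<in> {\<alpha>, \<alpha> - \<gamma>}" and "z \<in> space D" and "eps m \<beta> \<noteq> \<infinity>"
  shows "bdd_below (range (\<lambda>\<theta>. loss h L \<theta> z))"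
  using bdd_below_emp_risk_of_erm_set[OF constant_sample_erm_set_nonempty[OF assms(1-3)] assms(4)]
  by (simp add: emp_risk_const[OF assms(1)])

text \<open>
  In case (b) nothing guarantees an exact empirical risk minimiser, which is needed when
  \<open>\<epsilon>(m, \<beta>) = 0\<close>. But if \<open>\<epsilon>(m, \<beta>)\<close> vanishes for large \<open>m\<close>, the bootstrap guarantee holds
  at every scale, which by the two-point estimate above is only possible when the loss does not
  depend on the data point at all.
\<close>
lemma loss_independent_of_point:
  assumes \<beta>: "\<beta> \<in> {\<alpha>, \<alpha> - \<gamma>}" "0 < \<beta>" "\<beta> < 1"
    and eps_zero: "eventually (\<lambda>m. eps m \<beta> = 0) sequentially"
    and "a \<in> space D" "a' \<in> space D"
  shows "loss h L \<theta> a = loss h L \<theta> a'"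
proof (rule ccontr)
  define d where "d = loss h L \<theta> a - loss h L \<theta> a'"
  assume "loss h L \<theta> a \<noteq> loss h L \<theta> a'"
  then have d: "d \<noteq> 0" by (simp add: d_def)
  have "eventually (\<lambda>n. 0 < n \<and> eps (2 * n) \<beta> = 0 \<and> 1 / (1 - \<beta>)\<^sup>2 < 2 * real n + 1) sequentially"
  proof (intro eventually_conj)
    show "eventually (\<lambda>n. 0 < n) sequentially" by (rule eventually_gt_at_top)
    show "eventually (\<lambda>n. eps (2 * n) \<beta> = 0) sequentially"
      using eps_zero unfolding eventually_sequentially by (metis le_trans mult_2 le_add2)
    show "eventually (\<lambda>n. 1 / (1 - \<beta>)\<^sup>2 < 2 * real n + 1) sequentially"
      unfolding eventually_sequentially
      by (intro exI[of _ "nat \<lceil>1 / (1 - \<beta>)\<^sup>2\<rceil>"] allI impI) linarith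
  qed
  then obtain n where "0 < n" and n: "eps (2 * n) \<beta> = 0" "1 / (1 - \<beta>)\<^sup>2 < 2 * real n + 1"
    unfolding eventually_sequentially by (meson order_refl)
  define S where "S = restrict (\<lambda>i. if i < n then a else a') {..<2 * n}"
  have "S \<in> space (sample_space D (2 * n))"
    using assms(5,6) by (auto simp: S_def space_sample_space)
  moreover have "uc_guarantee D h L (2 * n) ((\<bar>d\<bar> / (2 * n)) / 2) \<beta>"
    using n(1) d \<open>0 < n\<close> \<beta>(2) by (intro eps_less_uc_guarantee) auto
  ultimately have "1 - \<beta> \<le>
      measure_pmf.prob (resample_pmf (2 * n)) (uc_resample_event h L (2 * n) S (\<bar>d\<bar> / (4 * n)))"
    unfolding uc_guarantee_def by (simp add: field_simps)
  then have "(1 - \<beta>)\<^sup>2 * (2 * n + 1) \<le>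
      measure_pmf.prob (resample_pmf (2 * n)) (uc_resample_event h L (2 * n) S (\<bar>d\<bar> / (4 * n))) ^ 2
        * (2 * n + 1)"
    using \<beta>(3) by (intro mult_right_mono power_mono) auto
  also have "\<dots> \<le> 1"
    using prob_two_point_resample_stable[OF \<open>0 < n\<close> d[unfolded d_def]] unfolding S_def d_def by simp
  finally have "(2 * n + 1) * (1 - \<beta>)\<^sup>2 \<le> 1" by (simp add: mult.commute)
  moreover have "1 < (2 * n + 1) * (1 - \<beta>)\<^sup>2"
    using n(2) \<beta>(3) by (simp add: pos_divide_less_eq add.commute)
  ultimately show False by simp
qed

lemma erm_set_resample_nonempty:
  assumes S: "S \<in> space (sample_space D m)" and J: "J \<in> set_pmf (resample_pmf m)"
    and \<beta>: "\<beta> \<in> {\<alpha>, \<alpha> - \<gamma>}" "0 < \<beta>" "\<beta> < 1" and "0 < m"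
    and \<epsilon>: "eps m \<beta> = ereal \<epsilon>"
  shows "erm_set h L m (S \<circ> J) (eps m \<beta>) \<noteq> {}"
proof -
  have in_space: "(S \<circ> J) i \<in> space D" if "i < m" for i
    using resample_in_space[OF S J that] .
  have "0 \<le> \<epsilon>" using eps_nonneg[of m \<beta>] \<epsilon> by simp
  consider "0 < \<epsilon>" | "\<epsilon> = 0" and "eps = eps_b D h L" | "\<epsilon> = 0" and
      "\<forall>m S. (\<forall>i<m. S i \<in> space D) \<longrightarrow> (\<exists>\<theta>. \<forall>\<phi>. emp_risk h L m S \<theta> \<le> emp_risk h L m S \<phi>)"
    using \<open>0 \<le> \<epsilon>\<close> eps_cases by fastforce
  then show ?thesis
  proof cases
    case 1
    have "bdd_below (range (emp_risk h L m (S \<circ> J)))"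
      using loss_bdd_below[OF \<open>0 < m\<close> \<beta>(1) in_space] \<epsilon> by (intro bdd_below_emp_risk) simp
    then show ?thesis unfolding \<epsilon> using 1 by (rule erm_set_nonempty_of_bdd_below)
  next
    case 2
    have eps_zero: "eventually (\<lambda>m'. eps m' \<beta> = 0) sequentially"
      unfolding eventually_sequentially
      using eps_b_antimono[of m _ D h L \<beta>] eps_nonneg[of _ \<beta>] \<epsilon> 2 by (metis order_antisym zero_ereal_def)
    define z where "z = (S \<circ> J) 0"
    have z: "z \<in> space D" unfolding z_def using in_space \<open>0 < m\<close> .
    have "loss h L \<theta> ((S \<circ> J) i) = loss h L \<theta> z" if "i < m" for i \<theta>
      using loss_independent_of_point[OF \<beta> eps_zero in_space[OF that] z] .
    then have "emp_risk h L m (S \<circ> J) \<theta> = emp_risk h L m (\<lambda>_. z) \<theta>" for \<theta>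
      unfolding emp_risk_def by simp
    then have "erm_set h L m (S \<circ> J) (eps m \<beta>) = erm_set h L m (\<lambda>_. z) (eps m \<beta>)"
      by (rule erm_set_cong)
    also have "\<dots> \<noteq> {}"
      using z \<open>0 < m\<close> \<beta>(1) by (rule constant_sample_erm_set_nonempty[rotated 2])
    finally show ?thesis .
  next
    case 3
    then obtain \<theta> where "\<And>\<phi>. emp_risk h L m (S \<circ> J) \<theta> \<le> emp_risk h L m (S \<circ> J) \<phi>"
      using in_space by blast
    then show ?thesis unfolding \<epsilon> using \<open>0 \<le> \<epsilon>\<close> by (rule erm_set_nonempty_of_minimizer)
  qed
qed

lemma pl_boot_ge_on_uc_event:
  assumes \<beta>: "\<beta> \<in> {\<alpha>, \<alpha> - \<gamma>}" "0 < \<beta>" "\<beta> < 1" and "0 < m"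
    and \<delta>: "0 < \<delta>" "risk_set D h L \<delta> \<subseteq> A" and eps_small: "eps m \<beta> < ereal (\<delta> / 3)"
    and S: "S \<in> uc_sample_event D h L m (\<delta> / 6)"
  shows "1 - \<beta> \<le> pl_boot h L A m S (eps m \<beta>)"
proof -
  have S_space: "S \<in> space (sample_space D m)" using S by (simp add: uc_sample_event_def)
  obtain \<epsilon> where \<epsilon>: "eps m \<beta> = ereal \<epsilon>" "\<epsilon> < \<delta> / 3"
    using eps_nonneg[of m \<beta>] eps_small by (cases "eps m \<beta>") auto
  let ?V = "uc_resample_event h L m S (\<delta> / 6)"
  have "erm_set h L m (S \<circ> J) (eps m \<beta>) \<inter> A \<noteq> {}"
    if "J \<in> ?V" and J: "J \<in> set_pmf (resample_pmf m)" for J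
  proof -
    obtain \<theta> where \<theta>: "\<theta> \<in> erm_set h L m (S \<circ> J) (ereal \<epsilon>)"
      using erm_set_resample_nonempty[OF S_space J \<beta> \<open>0 < m\<close> \<epsilon>(1)] \<epsilon>(1) by auto
    have "\<forall>\<phi>. \<bar>risk D h L \<phi> - emp_risk h L m (S \<circ> J) \<phi>\<bar> \<le> \<delta> / 3"
    proof
      fix \<phi>
      have "\<bar>risk D h L \<phi> - emp_risk h L m S \<phi>\<bar> \<le> \<delta> / 6"
        and "\<bar>emp_risk h L m S \<phi> - emp_risk h L m (S \<circ> J) \<phi>\<bar> \<le> \<delta> / 6"
        using S \<open>J \<in> ?V\<close> by (auto simp: uc_sample_event_def uc_resample_event_def)
      then show "\<bar>risk D h L \<phi> - emp_risk h L m (S \<circ> J) \<phi>\<bar> \<le> \<delta> / 3"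
        unfolding abs_le_iff by linarith
    qed
    then have "\<theta> \<in> risk_set D h L \<delta>"
      using \<theta> by (rule approx_erm_mem_risk_set) (use \<epsilon>(2) in linarith)
    then show ?thesis using \<theta> \<delta>(2) unfolding \<epsilon>(1) by blast
  qed
  then have "?V \<inter> set_pmf (resample_pmf m)
      \<subseteq> boot_event h L m S (eps m \<beta>) \<inter> {J. erm_set h L m (S \<circ> J) (eps m \<beta>) \<inter> A \<noteq> {}}"
    unfolding boot_event_def by blast
  then have "measure_pmf.prob (resample_pmf m) ?V \<le> pl_boot h L A m S (eps m \<beta>)"
    unfolding pl_boot_def boot_pmf_def by (rule measure_cond_pmf_ge[OF well_defined[OF S_space \<beta>(1)]])
  moreover have "uc_guarantee D h L m (\<delta> / 6) \<beta>"
    using eps_less_uc_guarantee[OF eps_small \<beta>(2) \<open>0 < m\<close>] by simp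
  ultimately show ?thesis using S_space unfolding uc_guarantee_def by fastforce
qed

text \<open>
  The Monte Carlo probability depends on \<open>S\<close> only through the finitely many events
  "the ERM set of \<open>S \<circ> J\<close> is nonempty" and "it meets \<open>A\<close>", one pair for each resampling vector \<open>J\<close>.
\<close>
lemma mc_prob_pl_hat_ge_measurable:
  assumes "\<beta> \<in> {\<alpha>, \<alpha> - \<gamma>}"
  shows "(\<lambda>S. measure_pmf.prob (mc_pmf h L m S (eps m \<beta>) B) {Js. t \<le> pl_hat h L A m S (eps m \<beta>) B Js})
           \<in> borel_measurable (sample_space D m)"
proof -
  define I where "I = set_pmf (resample_pmf m) \<times> (UNIV :: bool set)"
  define P :: "(nat \<Rightarrow> nat) \<times> bool \<Rightarrow> (nat \<Rightarrow> 'x \<times> 'y) \<Rightarrow> bool"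
    where "P i S \<longleftrightarrow> (if snd i then erm_set h L m (S \<circ> fst i) (eps m \<beta>) \<inter> A \<noteq> {}
                         else erm_set h L m (S \<circ> fst i) (eps m \<beta>) \<noteq> {})" for i S
  have finite: "finite I" unfolding I_def using finite_set_pmf_resample by simp
  have events: "{S \<in> space (sample_space D m). P i S} \<in> sets (sample_space D m)" for i
    unfolding P_def using nonempty_measurable hits_A_measurable by (cases "snd i") simp_all
  have determined: "measure_pmf.prob (mc_pmf h L m S (eps m \<beta>) B) {Js. t \<le> pl_hat h L A m S (eps m \<beta>) B Js}
      = measure_pmf.prob (mc_pmf h L m S' (eps m \<beta>) B) {Js. t \<le> pl_hat h L A m S' (eps m \<beta>) B Js}"
    if S: "S \<in> space (sample_space D m)" and "S' \<in> space (sample_space D m)"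
      and same: "\<forall>i\<in>I. P i S = P i S'" for S S'
  proof (rule mc_prob_pl_hat_ge_cong[OF well_defined[OF S assms]])
    fix J assume "J \<in> set_pmf (resample_pmf m)"
    then have "(J, False) \<in> I" "(J, True) \<in> I" unfolding I_def by simp_all
    from bspec[OF same this(1)] bspec[OF same this(2)]
    show "(erm_set h L m (S \<circ> J) (eps m \<beta>) \<noteq> {} \<longleftrightarrow> erm_set h L m (S' \<circ> J) (eps m \<beta>) \<noteq> {}) \<and>
        (erm_set h L m (S \<circ> J) (eps m \<beta>) \<inter> A \<noteq> {} \<longleftrightarrow> erm_set h L m (S' \<circ> J) (eps m \<beta>) \<inter> A \<noteq> {})"
      unfolding P_def by simp
  qed
  show ?thesis by (rule borel_measurable_of_finitely_many_events[OF finite events determined])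
qed

lemma prob_pl_hat_ge_eventually:
  assumes \<beta>: "\<beta> \<in> {\<alpha>, \<alpha> - \<gamma>}" "0 < \<beta>" "\<beta> < 1" and "0 < B" and "0 \<le> g"
  shows "eventually (\<lambda>m. (1 - \<beta>) * (1 - exp (-2 * real B * g\<^sup>2))
           \<le> prob_pl_hat_ge D h L A m (eps m \<beta>) B (1 - \<beta> - g)) sequentially"
proof -
  obtain \<delta> where \<delta>: "0 < \<delta>" "risk_set D h L \<delta> \<subseteq> A" using A_contains by blast
  have bound: "(1 - \<beta>) * (1 - exp (-2 * real B * g\<^sup>2)) \<le> prob_pl_hat_ge D h L A m (eps m \<beta>) B (1 - \<beta> - g)"
    if "0 < m" and eps_small: "eps m \<beta> < ereal (\<delta> / 3)" for m
  proof -
    let ?M = "sample_space D m"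
    let ?f = "\<lambda>S. measure_pmf.prob (mc_pmf h L m S (eps m \<beta>) B) {Js. 1 - \<beta> - g \<le> pl_hat h L A m S (eps m \<beta>) B Js}"
    have on_uc_event: "1 - exp (-2 * real B * g\<^sup>2) \<le> ?f S" if "S \<in> uc_sample_event D h L m (\<delta> / 6)" for S
    proof -
      have "1 - \<beta> - g + g \<le> pl_boot h L A m S (eps m \<beta>)"
        using pl_boot_ge_on_uc_event[OF \<beta> \<open>0 < m\<close> \<delta> eps_small that] by simp
      then show ?thesis
        unfolding pl_boot_def mc_pmf_def pl_hat_def
        by (rule Pi_pmf_frequency_hoeffding[OF \<open>0 < B\<close> _ \<open>0 \<le> g\<close>, unfolded o_def])
    qed
    have "1 - \<beta> \<le> measure ?M (uc_sample_event D h L m (\<delta> / 6))"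
      using eps_less_uc_guarantee[OF eps_small \<beta>(2) \<open>0 < m\<close>] by (simp add: uc_guarantee_def)
    then have "(1 - \<beta>) * (1 - exp (-2 * real B * g\<^sup>2))
        \<le> measure ?M (uc_sample_event D h L m (\<delta> / 6)) * (1 - exp (-2 * real B * g\<^sup>2))"
      by (rule mult_right_mono) simp
    also have "\<dots> \<le> (\<integral>S. ?f S \<partial>?M)"
      by (rule measure_mult_le_integral[OF prob_space_sample_space[OF prob_space_D] uc_event_measurable
            mc_prob_pl_hat_ge_measurable[OF \<beta>(1)] _ _ on_uc_event]) simp_all
    finally show ?thesis unfolding prob_pl_hat_ge_def .
  qed
  have "eventually (\<lambda>m. 0 < m \<and> eps m \<beta> < ereal (\<delta> / 3)) sequentially"
    using \<delta>(1) by (intro eventually_conj eventually_gt_at_top eps_eventually_less) simp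
  then show ?thesis by (rule eventually_mono) (rule bound; simp)
qed

lemma liminf_prob_pl_hat_ge:
  assumes "\<beta> \<in> {\<alpha>, \<alpha> - \<gamma>}" and "0 < \<beta>" and "0 \<le> g"
  shows "ereal ((1 - \<beta>) * (1 - exp (-2 * real B * g\<^sup>2)))
           \<le> liminf (\<lambda>m. ereal (prob_pl_hat_ge D h L A m (eps m \<beta>) B (1 - \<beta> - g)))"
proof (rule Liminf_bounded)
  show "eventually (\<lambda>m. ereal ((1 - \<beta>) * (1 - exp (-2 * real B * g\<^sup>2)))
      \<le> ereal (prob_pl_hat_ge D h L A m (eps m \<beta>) B (1 - \<beta> - g))) sequentially"
  proof (cases "\<beta> < 1 \<and> 0 < B")
    case True
    then show ?thesis using prob_pl_hat_ge_eventually[OF assms(1,2) _ _ assms(3)] by simp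
  next
    case False
    then have "(1 - \<beta>) * (1 - exp (-2 * real B * g\<^sup>2)) \<le> 0"
      by (auto intro: mult_nonpos_nonneg)
    then show ?thesis
      by (intro always_eventually allI) (simp add: order_trans[OF _ prob_pl_hat_ge_nonneg])
  qed
qed

end

lemma hoeffding_exponent_le:
  fixes B :: nat and \<gamma> :: real
  assumes "0 < \<gamma>"
  shows "exp (-2 * real B * \<gamma>\<^sup>2) \<le> exp (- (6 * real B * \<gamma>\<^sup>2) / (4 * \<gamma> + 3))"
proof -
  have "6 * (real B * \<gamma>\<^sup>2) \<le> 2 * (real B * \<gamma>\<^sup>2) * (4 * \<gamma> + 3)"
    using assms by (simp add: algebra_simps)
  then have "6 * real B * \<gamma>\<^sup>2 / (4 * \<gamma> + 3) \<le> 2 * real B * \<gamma>\<^sup>2"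
    using assms by (simp add: divide_le_eq algebra_simps)
  then show ?thesis by simp
qed

lemma hoeffding_exponent_le_gamma:
  fixes B :: nat and \<gamma> :: real
  assumes "0 < \<gamma>" and "(4 * \<gamma> + 3) * ln (1 / \<gamma>) / (6 * \<gamma>\<^sup>2) \<le> real B"
  shows "exp (-2 * real B * \<gamma>\<^sup>2) \<le> \<gamma>"
proof (cases "\<gamma> < 1")
  case True
  then have "0 < ln (1 / \<gamma>)" using assms(1) by simp
  then have "ln (1 / \<gamma>) \<le> (4 * \<gamma> + 3) * ln (1 / \<gamma>) / 3"
    using assms(1) by (simp add: field_simps)
  also have "\<dots> = 2 * \<gamma>\<^sup>2 * ((4 * \<gamma> + 3) * ln (1 / \<gamma>) / (6 * \<gamma>\<^sup>2))"
    using assms(1) by (simp add: field_simps power2_eq_square)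
  also have "\<dots> \<le> 2 * \<gamma>\<^sup>2 * real B"
    using assms by (intro mult_left_mono) auto
  finally have "exp (-2 * real B * \<gamma>\<^sup>2) \<le> exp (- ln (1 / \<gamma>))" by (simp add: ac_simps)
  also have "\<dots> = \<gamma>" using assms(1) by (simp add: ln_div)
  finally show ?thesis .
next
  case False
  have "exp (-2 * real B * \<gamma>\<^sup>2) \<le> exp 0" by (subst exp_le_cancel_iff) simp
  also have "\<dots> \<le> \<gamma>" using False by simp
  finally show ?thesis .
qed

lemma diff_le_mult_one_minus:
  fixes a e e' :: real
  assumes "0 \<le> a" and "0 \<le> e" and "e \<le> e'"
  shows "1 - a - e' \<le> (1 - a) * (1 - e)"
proof -
  have "(1 - a) * (1 - e) = 1 - a - e + a * e" by (simp add: algebra_simps)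
  moreover have "0 \<le> a * e" using assms by simp
  ultimately show ?thesis using assms(3) by linarith
qed

theorem theorem5:
  fixes D :: "('x \<times> 'y) measure"
    and h :: "'x \<Rightarrow> 'p::topological_space \<Rightarrow> 'o"
    and L :: "'o \<Rightarrow> 'y \<Rightarrow> real"
    and A :: "'p set"
    and eps :: "nat \<Rightarrow> real \<Rightarrow> ereal"
    and \<alpha> \<gamma> :: real
    and B :: nat
  assumes D: "prob_space D"
    and risk_finite: "\<And>\<theta>. integrable D (loss h L \<theta>)"
    and A_borel: "A \<in> sets borel"
    and A_contains: "\<exists>\<delta>>0. risk_set D h L \<delta> \<subseteq> A"
    and suc: "strong_uc D h L"
    and cases:
      "((\<exists>\<theta>0. \<forall>\<theta>. risk D h L \<theta>0 \<le> risk D h L \<theta>)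
          \<and> (\<forall>m S. (\<forall>i<m. S i \<in> space D) \<longrightarrow> (\<exists>\<theta>. \<forall>\<phi>. emp_risk h L m S \<theta> \<le> emp_risk h L m S \<phi>))
          \<and> eps = eps_a D h L)
       \<or> eps = eps_b D h L"
    and meas_uc: "\<And>m \<epsilon>. {S \<in> space (sample_space D m).
                     \<forall>\<theta>. \<bar>risk D h L \<theta> - emp_risk h L m S \<theta>\<bar> \<le> \<epsilon>} \<in> sets (sample_space D m)"
    and meas_ne: "\<And>m \<epsilon> J. {S \<in> space (sample_space D m). erm_set h L m (S \<circ> J) \<epsilon> \<noteq> {}}
                     \<in> sets (sample_space D m)"
    and meas_A: "\<And>m \<epsilon> J. {S \<in> space (sample_space D m). erm_set h L m (S \<circ> J) \<epsilon> \<inter> A \<noteq> {}}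
                     \<in> sets (sample_space D m)"
    and well_defined: "\<And>m S \<beta>. S \<in> space (sample_space D m) \<Longrightarrow> \<beta> \<in> {\<alpha>, \<alpha> - \<gamma>} \<Longrightarrow>
                     set_pmf (resample_pmf m) \<inter> boot_event h L m S (eps m \<beta>) \<noteq> {}"
    and \<gamma>_pos: "0 < \<gamma>" and \<gamma>_less: "\<gamma> < \<alpha>"
  shows "liminf (\<lambda>m. ereal (prob_pl_hat_ge D h L A m (eps m \<alpha>) B (1 - \<alpha> - \<gamma>)))
           \<ge> ereal (1 - \<alpha> - exp (- (6 * real B * \<gamma>\<^sup>2) / (4 * \<gamma> + 3)))
       \<and> (real B \<ge> (4 * \<gamma> + 3) * ln (1 / \<gamma>) / (6 * \<gamma>\<^sup>2) \<longrightarrow>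
            liminf (\<lambda>m. ereal (prob_pl_hat_ge D h L A m (eps m (\<alpha> - \<gamma>)) B (1 - \<alpha>)))
              \<ge> ereal (1 - \<alpha>))"
proof -
  interpret bootstrap_plausibility D h L A eps \<alpha> \<gamma>
    by (intro bootstrap_plausibility.intro D A_contains suc cases meas_ne meas_A well_defined)
      (simp add: uc_sample_event_def meas_uc)
  have "0 < \<alpha>" using \<gamma>_pos \<gamma>_less by simp
  have "ereal (1 - \<alpha> - exp (- (6 * real B * \<gamma>\<^sup>2) / (4 * \<gamma> + 3)))
      \<le> ereal ((1 - \<alpha>) * (1 - exp (-2 * real B * \<gamma>\<^sup>2)))"
    using diff_le_mult_one_minus[OF _ _ hoeffding_exponent_le[OF \<gamma>_pos]] \<open>0 < \<alpha>\<close> by simp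
  also have "\<dots> \<le> liminf (\<lambda>m. ereal (prob_pl_hat_ge D h L A m (eps m \<alpha>) B (1 - \<alpha> - \<gamma>)))"
    using \<open>0 < \<alpha>\<close> \<gamma>_pos by (intro liminf_prob_pl_hat_ge) auto
  finally have first: "ereal (1 - \<alpha> - exp (- (6 * real B * \<gamma>\<^sup>2) / (4 * \<gamma> + 3)))
      \<le> liminf (\<lambda>m. ereal (prob_pl_hat_ge D h L A m (eps m \<alpha>) B (1 - \<alpha> - \<gamma>)))" .
  have "ereal (1 - \<alpha>) \<le> liminf (\<lambda>m. ereal (prob_pl_hat_ge D h L A m (eps m (\<alpha> - \<gamma>)) B (1 - \<alpha>)))"
    if "real B \<ge> (4 * \<gamma> + 3) * ln (1 / \<gamma>) / (6 * \<gamma>\<^sup>2)"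
  proof -
    have "ereal (1 - \<alpha>) \<le> ereal ((1 - (\<alpha> - \<gamma>)) * (1 - exp (-2 * real B * \<gamma>\<^sup>2)))"
      using diff_le_mult_one_minus[OF _ _ hoeffding_exponent_le_gamma[OF \<gamma>_pos that], of "\<alpha> - \<gamma>"] \<gamma>_less
      by simp
    also have "\<dots> \<le> liminf (\<lambda>m. ereal (prob_pl_hat_ge D h L A m (eps m (\<alpha> - \<gamma>)) B (1 - (\<alpha> - \<gamma>) - \<gamma>)))"
      using \<gamma>_pos \<gamma>_less by (intro liminf_prob_pl_hat_ge) auto
    finally show ?thesis by simp
  qed
  with first show ?thesis by blast
qed

end
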